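(* In the setting described in the context, let $p$ be a facet of $\Delta_\lambda$ of $\mathbf a$-degree at least $1$. Then the simplicial complex $F_{<p}\cap p$ has dimension $\dim\Delta_\lambda-1=|\lambda|-3$.
   Context: Let $n,d\ge2$, $V(n,d)=\{\mathbf b\in\mathbb N^n:\sum_i b_i=d\}$, and let $\mathbf a\in V(n,d)$ satisfy $a_1\le a_2\le\dots\le a_n$ and $\mathbf a\notin\{(0,\dots,0,d),(0,\dots,0,1,d-1),(0,\dots,0,2,d-2)\}$. Let $\Gamma=V(n,d)\setminus\{\mathbf a\}$ and assume $\Gamma+\Gamma=V(n,2d)$. Order $V(n,d)$ lexicographically ($b<c$ iff the first nonzero coordinate of $c-b$ is positive). Let $\lambda$ be in the semigroup generated by $\Gamma$, and $|\lambda|=(\sum_i\lambda_i)/d=:k$. A closed chain from $0$ to $\lambda$ with links in $V(n,d)$ is a sequence $0=v_0,v_1,\dots,v_k=\lambda$ in $\mathbb N^n$ with $v_j-v_{j-1}\in V(n,d)$ for all $j$; its links are $v_j-v_{j-1}$ and its $\mathbf a$-degree is the number of links equal to $\mathbf a$; its open chain is the set $\{v_1,\dots,v_{k-1}\}$. $\Delta_\lambda$ is the simplicial complex on $\mathbb N^n$ whose facets are the open chains of all such closed chains (it is pure of dimension $|\lambda|-2$); $\Gamma_\lambda$ is the subcomplex generated by the open chains of closed chains all of whose links lie in $\Gamma$. Facets are ordered: $q<p$ iff the $\mathbf a$-degree of $q$ is smaller than that of $p$, or they are equal and the sequence of links of $q$ is lexicographically smaller than that of $p$ (comparing first links first, using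 the order on $V(n,d)$). For a facet $p$, $F_{<p}$ is the subcomplex of $\Delta_\lambda$ generated by all facets $q<p$, and $p$ also denotes the full simplex on its vertex set. *)

theory Defs
  imports Main
begin

definition Vnd :: "nat \<Rightarrow> nat \<Rightarrow> nat list set" where
  "Vnd n d = {b. length b = n \<and> sum_list b = d}"

definition vadd :: "nat list \<Rightarrow> nat list \<Rightarrow> nat list" where
  "vadd xs ys = map (\<lambda>(x, y). x + y) (zip xs ys)"

definition vzero :: "nat \<Rightarrow> nat list" where
  "vzero n = replicate n 0"

definition vsum :: "nat \<Rightarrow> nat list list \<Rightarrow> nat list" where
  "vsum n ls = foldr vadd ls (vzero n)"

definition vlex :: "nat list \<Rightarrow> nat list \<Rightarrow> bool" where
  "vlex b c \<longleftrightarrow> (b, c) \<in> lexord {(x, y). x < y}"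

text \<open>A closed chain from 0 to lam is given by its sequence of links l_1..l_k in V(n,d);
  its vertices are v_j = l_1 + ... + l_j.\<close>
definition is_chain :: "nat \<Rightarrow> nat \<Rightarrow> nat list \<Rightarrow> nat list list \<Rightarrow> bool" where
  "is_chain n d lam ls \<longleftrightarrow> set ls \<subseteq> Vnd n d \<and> vsum n ls = lam"

fun psums :: "nat list list \<Rightarrow> nat list list" where
  "psums [] = []"
| "psums (l # ls) = l # map (vadd l) (psums ls)"

definition open_chain :: "nat list list \<Rightarrow> nat list set" where
  "open_chain ls = set (butlast (psums ls))"

definition adeg :: "nat list \<Rightarrow> nat list list \<Rightarrow> nat" where
  "adeg a ls = count_list ls a"

definition facet_less :: "nat list \<Rightarrow> nat list list \<Rightarrow> nat list list \<Rightarrow> bool" where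
  "facet_less a qs ps \<longleftrightarrow> adeg a qs < adeg a ps \<or>
     (adeg a qs = adeg a ps \<and> (qs, ps) \<in> lexord {(b, c). vlex b c})"

definition Delta :: "nat \<Rightarrow> nat \<Rightarrow> nat list \<Rightarrow> nat list set set" where
  "Delta n d lam = {\<sigma>. \<exists>ms. is_chain n d lam ms \<and> \<sigma> \<subseteq> open_chain ms}"

definition F_lt_cap :: "nat \<Rightarrow> nat \<Rightarrow> nat list \<Rightarrow> nat list \<Rightarrow> nat list list \<Rightarrow> nat list set set" where
  "F_lt_cap n d a lam ps = {\<sigma>. \<sigma> \<subseteq> open_chain ps \<and>
      (\<exists>qs. is_chain n d lam qs \<and> facet_less a qs ps \<and> \<sigma> \<subseteq> open_chain qs)}"

definition cdim :: "'v set set \<Rightarrow> int" where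
  "cdim K = Max ((\<lambda>\<sigma>. int (card \<sigma>) - 1) ` K)"

end

theory Submission
  imports Defs
begin

text \<open>
  A facet of \<open>\<Delta>\<^sub>\<lambda>\<close> is determined by its open chain, so \<open>F\<^sub>< \<inter> p\<close> contains no face of the
  full size \<open>|\<lambda>| - 1\<close> and its dimension is at most \<open>|\<lambda>| - 3\<close>. For the lower bound pick two
  consecutive links \<open>u, w\<close> of \<open>p\<close>, one of them equal to \<open>a\<close>. Since \<open>\<Gamma> + \<Gamma> = V(n,2d)\<close>, we can
  write \<open>u + w = x + y\<close> with \<open>x, y \<in> \<Gamma>\<close>; replacing \<open>u, w\<close> by \<open>x, y\<close> gives a chain \<open>q\<close> of
  smaller \<open>a\<close>-degree whose open chain shares all vertices of \<open>p\<close> but the one between \<open>u\<close> and \<open>w\<close>.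
\<close>

lemma length_vadd [simp]: "length (vadd x y) = min (length x) (length y)"
  by (simp add: vadd_def)

lemma nth_vadd: "i < length x \<Longrightarrow> i < length y \<Longrightarrow> vadd x y ! i = x ! i + y ! i"
  by (simp add: vadd_def)

lemma vadd_assoc: "vadd (vadd x y) z = vadd x (vadd y z)"
  by (rule nth_equalityI) (auto simp: nth_vadd)

lemma vadd_vzero: "length x = n \<Longrightarrow> vadd x (vzero n) = x"
  by (rule nth_equalityI) (auto simp: nth_vadd vzero_def)

lemma vadd_left_cancel:
  assumes "length x = length z" "length y = length z" "vadd z x = vadd z y"
  shows "x = y"
proof (rule nth_equalityI)
  show "length x = length y" using assms(1,2) by simp
  fix i assume "i < length x"
  with assms show "x ! i = y ! i" by (metis add_left_cancel nth_vadd)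
qed

lemma sum_list_vadd: "length x = length y \<Longrightarrow> sum_list (vadd x y) = sum_list x + sum_list y"
proof (induction x arbitrary: y)
  case Nil then show ?case by (simp add: vadd_def)
next
  case (Cons a x)
  then obtain b y' where "y = b # y'" by (cases y) auto
  with Cons show ?case by (simp add: vadd_def)
qed

lemma vsum_Nil [simp]: "vsum n [] = vzero n"
  by (simp add: vsum_def)

lemma vsum_Cons [simp]: "vsum n (l # ls) = vadd l (vsum n ls)"
  by (simp add: vsum_def)

lemma vsum_append: "vsum n (xs @ ys) = foldr vadd xs (vsum n ys)"
  by (simp add: vsum_def)

lemma length_vsum: "\<forall>l\<in>set ls. length l = n \<Longrightarrow> length (vsum n ls) = n"
  by (induction ls) (auto simp: vzero_def)

lemma sum_list_vsum: "set ls \<subseteq> Vnd n d \<Longrightarrow> sum_list (vsum n ls) = d * length ls"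
proof (induction ls)
  case Nil then show ?case by (simp add: vzero_def)
next
  case (Cons l ls)
  then have "length (vsum n ls) = n" "length l = n" "sum_list l = d"
    by (auto simp: Vnd_def intro: length_vsum)
  with Cons show ?case by (simp add: sum_list_vadd)
qed

lemma is_chain_lengths: "is_chain n d lam ls \<Longrightarrow> \<forall>l\<in>set ls. length l = n"
  by (auto simp: is_chain_def Vnd_def)

lemma is_chain_length:
  assumes "is_chain n d lam ls" "d > 0"
  shows "length ls = sum_list lam div d"
  using assms sum_list_vsum[of ls n d] by (auto simp: is_chain_def)

lemma sum_list_vsum_take:
  "is_chain n d lam ls \<Longrightarrow> sum_list (vsum n (take j ls)) = d * min j (length ls)"
proof -
  assume "is_chain n d lam ls"
  then have "set (take j ls) \<subseteq> Vnd n d"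
    using set_take_subset[of j ls] by (auto simp: is_chain_def)
  then show ?thesis by (simp add: sum_list_vsum min.commute)
qed

lemma length_psums [simp]: "length (psums ls) = length ls"
  by (induction ls) auto

lemma psums_eq_prefix_sums:
  "\<forall>l\<in>set ls. length l = n \<Longrightarrow> psums ls = map (\<lambda>j. vsum n (take j ls)) [1..<Suc (length ls)]"
proof (induction ls)
  case Nil then show ?case by simp
next
  case (Cons l ls)
  have "[1..<Suc (length (l # ls))] = 1 # map Suc [1..<Suc (length ls)]"
    by (simp add: upt_conv_Cons map_Suc_upt del: upt_Suc)
  with Cons show ?case by (simp add: vadd_vzero)
qed

lemma open_chain_eq_prefix_sums:
  assumes "\<forall>l\<in>set ls. length l = n"
  shows "open_chain ls = (\<lambda>j. vsum n (take j ls)) ` {1..<length ls}"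
proof -
  have "butlast [1..<Suc k] = [1..<k]" for k
    by (cases k) simp_all
  then show ?thesis
    by (simp only: open_chain_def psums_eq_prefix_sums[OF assms] map_butlast[symmetric]
        set_map set_upt)
qed

text \<open>The \<open>j\<close>-th vertex of a chain has coordinate sum \<open>d j\<close>, so distinct indices give distinct vertices.\<close>

lemma card_open_chain:
  assumes "is_chain n d lam ls" "d > 0"
  shows "card (open_chain ls) = length ls - 1"
proof -
  have "inj_on (\<lambda>j. vsum n (take j ls)) {1..<length ls}"
  proof (rule inj_onI)
    fix i j assume "i \<in> {1..<length ls}" "j \<in> {1..<length ls}"
      "vsum n (take i ls) = vsum n (take j ls)"
    with sum_list_vsum_take[OF assms(1)] assms(2) show "i = j" by (metis min_absorb1 less_imp_le
      atLeastLessThan_iff mult_cancel1 not_gr0)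
  qed
  then show ?thesis
    using open_chain_eq_prefix_sums[OF is_chain_lengths[OF assms(1)]] by (simp add: card_image)
qed

lemma eq_if_vsum_prefixes_eq:
  assumes "\<forall>l\<in>set ps. length l = n" "\<forall>l\<in>set qs. length l = n" "length ps = length qs"
    and "\<forall>j \<le> length ps. vsum n (take j ps) = vsum n (take j qs)"
  shows "ps = qs"
  using assms
proof (induction ps arbitrary: qs)
  case Nil then show ?case by simp
next
  case (Cons p ps)
  then obtain q qs' where qs: "qs = q # qs'" by (cases qs) auto
  from Cons.prems(4)[rule_format, of 1] Cons.prems(1,2) have "p = q"
    by (simp add: qs vadd_vzero)
  have "vsum n (take j ps) = vsum n (take j qs')" if "j \<le> length ps" for j
  proof (rule vadd_left_cancel)
    show "vadd p (vsum n (take j ps)) = vadd p (vsum n (take j qs'))"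
      using Cons.prems(4)[rule_format, of "Suc j"] that \<open>p = q\<close> by (simp add: qs)
  qed (use Cons.prems qs in \<open>auto intro!: length_vsum dest: in_set_takeD\<close>)
  with Cons.IH[of qs'] Cons.prems \<open>p = q\<close> show ?case by (simp add: qs)
qed

lemma open_chain_inj:
  assumes P: "is_chain n d lam ps" and Q: "is_chain n d lam qs" and "d > 0"
    and eq: "open_chain ps = open_chain qs"
  shows "ps = qs"
proof (rule eq_if_vsum_prefixes_eq)
  show LP: "\<forall>l\<in>set ps. length l = n" and LQ: "\<forall>l\<in>set qs. length l = n"
    using P Q by (auto dest: is_chain_lengths)
  show len: "length ps = length qs"
    using is_chain_length[OF P \<open>d > 0\<close>] is_chain_length[OF Q \<open>d > 0\<close>] by simp
  show "\<forall>j \<le> length ps. vsum n (take j ps) = vsum n (take j qs)"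
  proof (intro allI impI)
    fix j assume "j \<le> length ps"
    then consider "j = 0" | "j = length ps" | "j \<in> {1..<length ps}" by fastforce
    then show "vsum n (take j ps) = vsum n (take j qs)"
    proof cases
      case 1
      then show ?thesis by simp
    next
      case 2
      then show ?thesis using P Q len by (simp add: is_chain_def)
    next
      case 3
      then have "vsum n (take j ps) \<in> open_chain qs"
        using eq open_chain_eq_prefix_sums[OF LP] by auto
      then obtain j' where j': "j' \<in> {1..<length qs}" "vsum n (take j ps) = vsum n (take j' qs)"
        using open_chain_eq_prefix_sums[OF LQ] by auto
      with 3 have "j = j'"
        using sum_list_vsum_take[OF P, of j] sum_list_vsum_take[OF Q, of j'] len \<open>d > 0\<close> by auto
      with j' show ?thesis by simp
    qed
  qed
qed

lemma open_chain_exchange_links: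
  assumes "\<forall>l\<in>set (xs @ u # w # ys). length l = n" "length x = n" "length y = n"
    and "vadd x y = vadd u w"
  shows "open_chain (xs @ u # w # ys) - {vsum n (take (Suc (length xs)) (xs @ u # w # ys))}
    \<subseteq> open_chain (xs @ x # y # ys)"
proof
  let ?ps = "xs @ u # w # ys" and ?qs = "xs @ x # y # ys"
  have swap: "vadd x (vadd y z) = vadd u (vadd w z)" for z
    using assms(4) by (metis vadd_assoc)
  fix v assume v: "v \<in> open_chain ?ps - {vsum n (take (Suc (length xs)) ?ps)}"
  then obtain j where j: "j \<in> {1..<length ?ps}" "v = vsum n (take j ?ps)"
    unfolding open_chain_eq_prefix_sums[OF assms(1)] by blast
  with v have j_ne: "j \<noteq> Suc (length xs)" by blast
  have "vsum n (take j ?ps) = vsum n (take j ?qs)"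
  proof (cases "j \<le> length xs")
    case False
    with j_ne have "length xs + 2 \<le> j" by simp
    then obtain r where "j = length xs + 2 + r" using le_Suc_ex by blast
    then show ?thesis using swap by (simp add: vsum_append)
  qed simp
  moreover have "\<forall>l\<in>set ?qs. length l = n" using assms(1-3) by auto
  ultimately show "v \<in> open_chain ?qs"
    using j by (auto simp only: open_chain_eq_prefix_sums length_append list.size)
qed

lemma cdim_eqI:
  assumes "\<And>\<sigma>. \<sigma> \<in> K \<Longrightarrow> card \<sigma> \<le> m" and "\<tau> \<in> K" and "card \<tau> = m"
  shows "cdim K = int m - 1"
  unfolding cdim_def
proof (rule Max_eqI)
  have "(\<lambda>\<sigma>. int (card \<sigma>) - 1) ` K \<subseteq> {-1..int m - 1}"
    using assms(1) by force
  then show "finite ((\<lambda>\<sigma>. int (card \<sigma>) - 1) ` K)"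
    by (rule finite_subset) simp
  show "y \<le> int m - 1" if "y \<in> (\<lambda>\<sigma>. int (card \<sigma>) - 1) ` K" for y
    using that assms(1) by force
  show "int m - 1 \<in> (\<lambda>\<sigma>. int (card \<sigma>) - 1) ` K"
    using assms(2,3) by force
qed

lemma cdim_Delta:
  assumes P: "is_chain n d lam ps" and "d > 0" and "ps \<noteq> []"
  shows "cdim (Delta n d lam) = int (length ps) - 2"
proof -
  have "card \<sigma> \<le> length ps - 1" if \<sigma>: "\<sigma> \<in> Delta n d lam" for \<sigma>
  proof -
    obtain ms where ms: "is_chain n d lam ms" "\<sigma> \<subseteq> open_chain ms"
      using \<sigma> by (auto simp: Delta_def)
    have "card \<sigma> \<le> card (open_chain ms)"
      using ms(2) by (rule card_mono[rotated]) (simp add: open_chain_def)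
    also have "\<dots> = length ms - 1"
      by (rule card_open_chain[OF ms(1) \<open>d > 0\<close>])
    also have "length ms = length ps"
      using is_chain_length[OF ms(1) \<open>d > 0\<close>] is_chain_length[OF P \<open>d > 0\<close>] by simp
    finally show ?thesis .
  qed
  moreover have "open_chain ps \<in> Delta n d lam"
    using P by (auto simp: Delta_def)
  ultimately have "cdim (Delta n d lam) = int (length ps - 1) - 1"
    using card_open_chain[OF P \<open>d > 0\<close>] by (rule cdim_eqI)
  then show ?thesis
    using \<open>ps \<noteq> []\<close> by (simp add: of_nat_diff Suc_le_eq)
qed

lemma facet_less_irrefl: "\<not> facet_less a ps ps"
  unfolding facet_less_def
  by (simp add: lexord_irreflexive vlex_def)

lemma card_F_lt_cap_face_le:
  assumes P: "is_chain n d lam ps" and "d > 0" and "\<sigma> \<in> F_lt_cap n d a lam ps"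
  shows "card \<sigma> \<le> length ps - 2"
proof -
  obtain qs where \<sigma>: "\<sigma> \<subseteq> open_chain ps" "\<sigma> \<subseteq> open_chain qs"
    and Q: "is_chain n d lam qs" and less: "facet_less a qs ps"
    using assms(3) by (auto simp: F_lt_cap_def)
  have fin: "finite (open_chain ps)" "finite (open_chain qs)"
    by (auto simp: open_chain_def)
  have "card \<sigma> \<le> length ps - 1"
    using card_mono[OF fin(1) \<sigma>(1)] card_open_chain[OF P \<open>d > 0\<close>] by simp
  moreover have "card \<sigma> \<noteq> length ps - 1"
  proof
    assume full: "card \<sigma> = length ps - 1"
    have "length qs = length ps"
      using is_chain_length[OF P \<open>d > 0\<close>] is_chain_length[OF Q \<open>d > 0\<close>] by simp
    with full have "\<sigma> = open_chain ps" "\<sigma> = open_chain qs"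
      using card_seteq[OF fin(1) \<sigma>(1)] card_seteq[OF fin(2) \<sigma>(2)]
        card_open_chain[OF P \<open>d > 0\<close>] card_open_chain[OF Q \<open>d > 0\<close>] by auto
    then have "qs = ps" using open_chain_inj[OF Q P \<open>d > 0\<close>] by simp
    with less show False using facet_less_irrefl by metis
  qed
  ultimately show ?thesis by linarith
qed

lemma split_list_adjacent:
  assumes "a \<in> set ps" "2 \<le> length ps"
  obtains xs u w ys where "ps = xs @ u # w # ys" "u = a \<or> w = a"
proof -
  obtain xs zs where ps: "ps = xs @ a # zs" using split_list[OF assms(1)] by blast
  show ?thesis
  proof (cases zs)
    case (Cons z zs')
    with ps that show ?thesis by blast
  next
    case Nil
    with ps assms(2) obtain xs' x where "xs = xs' @ [x]" by (cases xs rule: rev_cases) auto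
    with ps Nil that show ?thesis by simp
  qed
qed

lemma length_ge_2_if_link_not_in_chain:
  assumes "is_chain n d lam ps" "is_chain n d lam gs" "d > 0"
    and "a \<in> set ps" "a \<notin> set gs"
  shows "2 \<le> length ps"
proof (rule ccontr)
  assume "\<not> 2 \<le> length ps"
  with assms(4) have "ps = [a]" by (cases ps) (auto simp: Suc_le_eq)
  moreover from this have "length gs = 1"
    using is_chain_length[OF assms(1,3)] is_chain_length[OF assms(2,3)] by simp
  then obtain g where "gs = [g]" by (cases gs) auto
  ultimately show False
    using assms(1,2,5) by (auto simp: is_chain_def Vnd_def vadd_vzero)
qed

lemma F_lt_cap_face_by_exchange:
  assumes P: "is_chain n d lam ps" and "d > 0"
    and ps: "ps = xs @ u # w # ys" and "u = a \<or> w = a"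
    and x: "x \<in> Vnd n d - {a}" and y: "y \<in> Vnd n d - {a}" and "vadd x y = vadd u w"
  shows "\<exists>\<tau> \<in> F_lt_cap n d a lam ps. card \<tau> = length ps - 2"
proof
  define qs where "qs = xs @ x # y # ys"
  define \<tau> where "\<tau> = open_chain ps - {vsum n (take (Suc (length xs)) ps)}"
  have lengths: "\<forall>l\<in>set ps. length l = n"
    using is_chain_lengths[OF P] .
  have "vsum n qs = vsum n ps"
    using \<open>vadd x y = vadd u w\<close> by (simp add: qs_def ps vsum_append vadd_assoc[symmetric])
  then have "is_chain n d lam qs"
    using P x y by (auto simp: is_chain_def qs_def ps)
  moreover have "facet_less a qs ps"
    using x y \<open>u = a \<or> w = a\<close> by (auto simp: facet_less_def adeg_def qs_def ps)
  moreover have "\<tau> \<subseteq> open_chain qs"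
    unfolding \<tau>_def qs_def ps
    by (rule open_chain_exchange_links) (use lengths x y \<open>vadd x y = vadd u w\<close> in \<open>auto simp: ps Vnd_def\<close>)
  ultimately show "\<tau> \<in> F_lt_cap n d a lam ps"
    by (auto simp: F_lt_cap_def \<tau>_def)
  have "vsum n (take (Suc (length xs)) ps) \<in> open_chain ps"
    unfolding open_chain_eq_prefix_sums[OF lengths] by (rule imageI) (simp add: ps)
  then show "card \<tau> = length ps - 2"
    unfolding \<tau>_def using card_open_chain[OF P \<open>d > 0\<close>] by (simp add: card_Diff_singleton)
qed

theorem lemma3p1:
  fixes n d :: nat and a lam :: "nat list" and ps :: "nat list list"
  assumes "n \<ge> 2" and "d \<ge> 2"
    and "a \<in> Vnd n d" and "sorted a"
    and "a \<noteq> replicate (n - 1) 0 @ [d]"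
    and "a \<noteq> replicate (n - 2) 0 @ [1, d - 1]"
    and "a \<noteq> replicate (n - 2) 0 @ [2, d - 2]"
    and "{vadd x y | x y. x \<in> Vnd n d - {a} \<and> y \<in> Vnd n d - {a}} = Vnd n (2 * d)"
    and "\<exists>gs. gs \<noteq> [] \<and> set gs \<subseteq> Vnd n d - {a} \<and> vsum n gs = lam"
    and "is_chain n d lam ps" and "adeg a ps \<ge> 1"
  shows "cdim (F_lt_cap n d a lam ps) = cdim (Delta n d lam) - 1
    \<and> cdim (F_lt_cap n d a lam ps) = int (sum_list lam div d) - 3"
proof -
  note P = \<open>is_chain n d lam ps\<close>
  have "d > 0" using assms(2) by simp
  have "a \<in> set ps" using assms(11) count_list_0_iff[of ps a] by (auto simp: adeg_def)
  then have "ps \<noteq> []" by auto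
  obtain gs where "set gs \<subseteq> Vnd n d - {a}" "vsum n gs = lam" using assms(9) by blast
  then have "2 \<le> length ps"
    using length_ge_2_if_link_not_in_chain[OF P _ \<open>d > 0\<close> \<open>a \<in> set ps\<close>] by (auto simp: is_chain_def)
  then obtain xs u w ys where ps: "ps = xs @ u # w # ys" and "u = a \<or> w = a"
    by (rule split_list_adjacent[OF \<open>a \<in> set ps\<close>])
  then have "vadd u w \<in> Vnd n (2 * d)"
    using P by (auto simp: is_chain_def Vnd_def sum_list_vadd)
  then have "vadd u w \<in> {vadd x y | x y. x \<in> Vnd n d - {a} \<and> y \<in> Vnd n d - {a}}"
    unfolding assms(8) .
  then obtain x y where "vadd u w = vadd x y" and x: "x \<in> Vnd n d - {a}" and y: "y \<in> Vnd n d - {a}"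
    unfolding mem_Collect_eq by (elim exE conjE)
  obtain \<tau> where \<tau>: "\<tau> \<in> F_lt_cap n d a lam ps" "card \<tau> = length ps - 2"
    using F_lt_cap_face_by_exchange[OF P \<open>d > 0\<close> ps \<open>u = a \<or> w = a\<close> x y]
      \<open>vadd u w = vadd x y\<close> by auto
  have "cdim (F_lt_cap n d a lam ps) = int (length ps - 2) - 1"
    using card_F_lt_cap_face_le[OF P \<open>d > 0\<close>] \<tau> by (rule cdim_eqI)
  moreover have "cdim (Delta n d lam) = int (length ps) - 2"
    using cdim_Delta[OF P \<open>d > 0\<close> \<open>ps \<noteq> []\<close>] .
  ultimately show ?thesis
    using is_chain_length[OF P \<open>d > 0\<close>] \<open>2 \<le> length ps\<close> by (simp add: of_nat_diff)
qed

end
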